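(* Let $0<\alpha\le 5\pi/6$. Then for all $u,v\in V$: $u$ and $v$ are connected in $G^s_\alpha$ if and only if they are connected in $G_R$.
   Context: Let $V$ be a finite set of pairwise distinct points (nodes) in the Euclidean plane, $d$ the Euclidean distance, and $R>0$. Let $G_R=(V,E)$ be the undirected graph with $E=\{\{u,v\}: u\neq v,\ d(u,v)\le R\}$. Fix a finite increasing sequence of radius levels $0<r_1<r_2<\dots<r_k=R$. For $u\in V$ and $1\le i\le k$ let $S_i(u)=\{v\in V\setminus\{u\}: d(u,v)\le r_i\}$. For $0<\alpha<2\pi$, a closed cone of width $\alpha$ with apex $u$ is a set $\{u+t(\cos\varphi,\sin\varphi): t\ge 0,\ \varphi\in[\theta-\alpha/2,\theta+\alpha/2]\}$ for some $\theta$. A finite set $S\subseteq V\setminus\{u\}$ has an $\alpha$-gap (at $u$) if some closed cone of width $\alpha$ with apex $u$ contains no node of $S$ (in particular $\emptyset$ has an $\alpha$-gap). The algorithm CBTC($\alpha$) assigns to each $u$ the index $i_u$ = the least $i\in\{1,\dots,k\}$ such that $S_i(u)$ has no $\alpha$-gap, or $i_u=k$ if there is no such $i$; set $N_\alpha(u)=S_{i_u}(u)$. Shrink-back: call $u$ a boundary node if $S_k(u)$ has an $\alpha$-gap. For a set $D$ of directions (angles) let $\mathrm{cover}_\alpha(D)=\{\theta: \exists\theta'\in D,\ \text{the angular distance between }\theta\text{ and }\theta'\text{ (mod }2\pi)\text{ is}\le\alpha/2\}$. For a boundary node $u$ and $1\le i\le k$ let $\mathrm{dir}_i$ be the set of directions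 from $u$ of the nodes in $S_i(u)$; let $i^*$ be the least $i$ with $\mathrm{cover}_\alpha(\mathrm{dir}_i)=\mathrm{cover}_\alpha(\mathrm{dir}_k)$ and set $N^s_\alpha(u)=S_{i^*}(u)$. For a non-boundary node set $N^s_\alpha(u)=N_\alpha(u)$. Let $N^s_\alpha=\{(u,v): v\in N^s_\alpha(u)\}$, $E^s_\alpha$ its symmetric closure $\{\{u,v\}: (u,v)\in N^s_\alpha\text{ or }(v,u)\in N^s_\alpha\}$, and $G^s_\alpha=(V,E^s_\alpha)$. *)

theory Defs
  imports Complex_Main
begin

text \<open>Points of the Euclidean plane are modelled as complex numbers (dist = Euclidean distance).
  Radius levels r 1 < ... < r k = R are given by a function r :: nat => real on {1..k}.\<close>

definition S_i :: "complex set \<Rightarrow> (nat \<Rightarrow> real) \<Rightarrow> nat \<Rightarrow> complex \<Rightarrow> complex set" where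
  "S_i V r i u = {v \<in> V. v \<noteq> u \<and> dist u v \<le> r i}"

definition cone :: "complex \<Rightarrow> real \<Rightarrow> real \<Rightarrow> complex set" where
  "cone u \<alpha> \<theta> = {u + complex_of_real t * cis \<phi> | t \<phi>.
      t \<ge> 0 \<and> \<theta> - \<alpha>/2 \<le> \<phi> \<and> \<phi> \<le> \<theta> + \<alpha>/2}"

definition has_gap :: "real \<Rightarrow> complex \<Rightarrow> complex set \<Rightarrow> bool" where
  "has_gap \<alpha> u S \<longleftrightarrow> (\<exists>\<theta>. \<forall>v\<in>S. v \<notin> cone u \<alpha> \<theta>)"

definition dirs :: "complex \<Rightarrow> complex set \<Rightarrow> real set" where
  "dirs u S = {\<phi>. \<exists>v\<in>S. \<exists>t>0. v - u = complex_of_real t * cis \<phi>}"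

definition cover :: "real \<Rightarrow> real set \<Rightarrow> real set" where
  "cover \<alpha> D = {\<theta>. \<exists>\<theta>'\<in>D. \<exists>m::int. \<bar>\<theta> - \<theta>' - 2 * pi * of_int m\<bar> \<le> \<alpha>/2}"

definition idx_u :: "complex set \<Rightarrow> (nat \<Rightarrow> real) \<Rightarrow> nat \<Rightarrow> real \<Rightarrow> complex \<Rightarrow> nat" where
  "idx_u V r k \<alpha> u =
     (if \<exists>i\<in>{1..k}. \<not> has_gap \<alpha> u (S_i V r i u)
      then (LEAST i. i \<in> {1..k} \<and> \<not> has_gap \<alpha> u (S_i V r i u)) else k)"

definition N_cbtc :: "complex set \<Rightarrow> (nat \<Rightarrow> real) \<Rightarrow> nat \<Rightarrow> real \<Rightarrow> complex \<Rightarrow> complex set" where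
  "N_cbtc V r k \<alpha> u = S_i V r (idx_u V r k \<alpha> u) u"

definition boundary :: "complex set \<Rightarrow> (nat \<Rightarrow> real) \<Rightarrow> nat \<Rightarrow> real \<Rightarrow> complex \<Rightarrow> bool" where
  "boundary V r k \<alpha> u \<longleftrightarrow> has_gap \<alpha> u (S_i V r k u)"

definition idx_star :: "complex set \<Rightarrow> (nat \<Rightarrow> real) \<Rightarrow> nat \<Rightarrow> real \<Rightarrow> complex \<Rightarrow> nat" where
  "idx_star V r k \<alpha> u = (LEAST i. i \<in> {1..k} \<and>
      cover \<alpha> (dirs u (S_i V r i u)) = cover \<alpha> (dirs u (S_i V r k u)))"

definition N_shrink :: "complex set \<Rightarrow> (nat \<Rightarrow> real) \<Rightarrow> nat \<Rightarrow> real \<Rightarrow> complex \<Rightarrow> complex set" where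
  "N_shrink V r k \<alpha> u =
     (if boundary V r k \<alpha> u then S_i V r (idx_star V r k \<alpha> u) u else N_cbtc V r k \<alpha> u)"

definition edge_s :: "complex set \<Rightarrow> (nat \<Rightarrow> real) \<Rightarrow> nat \<Rightarrow> real \<Rightarrow> complex \<Rightarrow> complex \<Rightarrow> bool" where
  "edge_s V r k \<alpha> u v \<longleftrightarrow> u \<in> V \<and> v \<in> V \<and>
      (v \<in> N_shrink V r k \<alpha> u \<or> u \<in> N_shrink V r k \<alpha> v)"

definition edge_R :: "complex set \<Rightarrow> real \<Rightarrow> complex \<Rightarrow> complex \<Rightarrow> bool" where
  "edge_R V R u v \<longleftrightarrow> u \<in> V \<and> v \<in> V \<and> u \<noteq> v \<and> dist u v \<le> R"

end

theory Submission
  imports Defs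
begin

(*
  Every edge of G^s_alpha has length at most R, so one direction is immediate. Conversely it
  suffices to connect the endpoints a, b of every edge of G_R in G^s_alpha, by induction on d(a, b).
  If b is not a shrink-back neighbour of a, then all neighbours of a are closer to a than b, and
  their directions cover the cone of width alpha around the direction of b. If some neighbour of a
  (or of b) is closer to the other endpoint than d(a, b), induction applies. Otherwise all
  neighbours of a lie in the lune {w. d(a, w) < d(a, b) <= d(w, b)}, hence see ab under an angle
  larger than pi/3, and the covering property yields neighbours of a on both sides of the line ab
  whose angular separation is at most alpha; likewise for b. As 2 alpha <= 5pi/3, a neighbour of a
  and a neighbour of b on the same side of ab make angles with ab summing to at most 5pi/6, and an
  elementary trigonometric estimate shows that they are closer to each other than a and b.
*)

lemma cos_lt_neg_half:
  assumes "2*pi/3 < x" "x < 4*pi/3"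
  shows "cos x < -1/2"
proof (cases "x \<le> pi")
  case True
  then have "cos x < cos (2*pi/3)" using assms by (intro cos_monotone_0_pi) auto
  then show ?thesis by (simp add: cos_120)
next
  case False
  have "cos (2*pi - x) < cos (2*pi/3)" using assms False by (intro cos_monotone_0_pi) auto
  then show ?thesis by (simp add: cos_120 cos_diff)
qed

lemma cos_add_lt_cos_plus_cos:
  assumes "0 < \<phi>" "0 < \<psi>" "\<phi> + \<psi> < pi"
  shows "1 + cos (\<phi> + \<psi>) < cos \<phi> + cos \<psi>"
proof -
  define s where "s = (\<phi> + \<psi>)/2"
  define d where "d = (\<phi> - \<psi>)/2"
  have "\<phi> = s + d" "\<psi> = s - d" by (simp_all add: s_def d_def field_simps)
  then have "cos \<phi> + cos \<psi> = 2 * cos s * cos d" by (simp add: cos_add cos_diff)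
  moreover have "\<phi> + \<psi> = 2 * s" by (simp add: s_def)
  then have "1 + cos (\<phi> + \<psi>) = 2 * cos s * cos s"
    using cos_double_cos[of s] by (simp add: power2_eq_square)
  moreover have "0 < cos s" unfolding s_def using assms by (intro cos_gt_zero_pi) auto
  moreover have "cos s < cos \<bar>d\<bar>" unfolding s_def d_def using assms
    by (intro cos_monotone_0_pi) auto
  ultimately show ?thesis by simp
qed

lemma two_cos_mult_cos_add_lt:
  assumes "pi/3 < \<phi>" "pi/3 < \<psi>" "\<phi> + \<psi> \<le> 5*pi/6"
  shows "2 * cos \<phi> * cos (\<phi> + \<psi>) < cos \<psi> - 1/2"
proof -
  have "\<phi> - (\<phi> + \<psi>) = - \<psi>" "\<phi> + (\<phi> + \<psi>) = 2*\<phi> + \<psi>" by simp_all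
  then have "2 * cos \<phi> * cos (\<phi> + \<psi>) = cos (2*\<phi> + \<psi>) + cos \<psi>"
    using cos_times_cos[of \<phi> "\<phi> + \<psi>"] by simp
  moreover have "cos (2*\<phi> + \<psi>) < -1/2" using assms by (intro cos_lt_neg_half) auto
  ultimately show ?thesis by simp
qed

lemma quadratic_le_max_endpoints:
  fixes x x0 x1 p q :: real
  assumes "x0 \<le> x" "x \<le> x1"
  shows "x\<^sup>2 + p*x + q \<le> max (x0\<^sup>2 + p*x0 + q) (x1\<^sup>2 + p*x1 + q)"
proof (cases "x + x0 + p \<le> 0")
  case True
  have "(x\<^sup>2 + p*x + q) - (x0\<^sup>2 + p*x0 + q) = (x - x0) * (x + x0 + p)"
    by (simp add: power2_eq_square algebra_simps)
  also have "\<dots> \<le> 0" using True assms by (simp add: mult_nonneg_nonpos)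
  finally show ?thesis by simp
next
  case False
  have "(x\<^sup>2 + p*x + q) - (x1\<^sup>2 + p*x1 + q) = (x - x1) * (x + x1 + p)"
    by (simp add: power2_eq_square algebra_simps)
  also have "\<dots> \<le> 0" using False assms by (simp add: mult_nonpos_nonneg)
  finally show ?thesis by simp
qed

lemma biquadratic_neg_on_box:
  fixes C c1 c2 :: real
  defines "g \<equiv> \<lambda>x y. x\<^sup>2 + y\<^sup>2 + 2*C*x*y - 2*c1*x - 2*c2*y"
  assumes x: "x0 \<le> x" "x \<le> x1" and y: "y0 \<le> y" "y \<le> y1"
    and "g x0 y0 < 0" "g x0 y1 < 0" "g x1 y0 < 0" "g x1 y1 < 0"
  shows "g x y < 0"
proof -
  have in_x: "g x' y' \<le> max (g x0 y') (g x1 y')" if "x0 \<le> x'" "x' \<le> x1" for x' y'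
    using quadratic_le_max_endpoints[OF that, of "2*C*y' - 2*c1" "y'\<^sup>2 - 2*c2*y'"]
    by (simp add: g_def algebra_simps)
  have in_y: "g x' y \<le> max (g x' y0) (g x' y1)" for x'
    using quadratic_le_max_endpoints[OF y, of "2*C*x' - 2*c2" "x'\<^sup>2 - 2*c1*x'"]
    by (simp add: g_def algebra_simps)
  show ?thesis
    using in_x[OF x, of y] in_y[of x0] in_y[of x1] assms(6-9) by linarith
qed

lemma norm_rcis_add_rcis_minus_one_lt_one:
  fixes a b \<phi> \<psi> :: real
  assumes a: "2 * cos \<phi> \<le> a" "a < 1" and b: "2 * cos \<psi> \<le> b" "b < 1"
    and "pi/3 < \<phi>" "pi/3 < \<psi>" "\<phi> + \<psi> \<le> 5*pi/6"
  shows "cmod (rcis a \<phi> + rcis b (-\<psi>) - 1) < 1"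
proof -
  \<comment> \<open>the squared norm is 1 + g a b, and g is convex in each radius, so it suffices to check
    the corners of the box [2 cos \<phi>, 1] \<times> [2 cos \<psi>, 1]\<close>
  define g where "g x y = x\<^sup>2 + y\<^sup>2 + 2*cos (\<phi> + \<psi>)*x*y - 2*cos \<phi>*x - 2*cos \<psi>*y" for x y
  have "(cmod (rcis a \<phi> + rcis b (-\<psi>) - 1))\<^sup>2 = (a * cos \<phi> + b * cos \<psi> - 1)\<^sup>2 + (a * sin \<phi> - b * sin \<psi>)\<^sup>2"
    by (simp add: cmod_power2)
  also have "\<dots> = a\<^sup>2 * ((sin \<phi>)\<^sup>2 + (cos \<phi>)\<^sup>2) + b\<^sup>2 * ((sin \<psi>)\<^sup>2 + (cos \<psi>)\<^sup>2) + 1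
      + 2*(cos \<phi> * cos \<psi> - sin \<phi> * sin \<psi>)*a*b - 2*cos \<phi>*a - 2*cos \<psi>*b"
    by algebra
  also have "\<dots> = 1 + g a b" by (simp add: g_def cos_add)
  finally have norm_sq: "(cmod (rcis a \<phi> + rcis b (-\<psi>) - 1))\<^sup>2 = 1 + g a b" .
  have angles: "\<phi> < pi/2" "\<psi> < pi/2" "2*pi/3 < \<phi> + \<psi>" using assms by auto
  have "0 < cos \<phi>" "0 < cos \<psi>" using assms angles by (auto intro: cos_gt_zero_pi)
  moreover have "cos (\<phi> + \<psi>) < cos (pi/2)" using assms angles by (intro cos_monotone_0_pi) auto
  moreover have "g (2 * cos \<phi>) (2 * cos \<psi>) = 8 * (cos \<phi> * cos \<psi>) * cos (\<phi> + \<psi>)"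
    by (simp add: g_def power2_eq_square algebra_simps)
  ultimately have "g (2 * cos \<phi>) (2 * cos \<psi>) < 0" by (simp add: mult_pos_neg)
  moreover have "g 1 1 < 0"
    using cos_add_lt_cos_plus_cos[of \<phi> \<psi>] assms by (simp add: g_def)
  moreover have "g (2 * cos \<phi>) 1 < 0" "g 1 (2 * cos \<psi>) < 0"
    using two_cos_mult_cos_add_lt[of \<phi> \<psi>] two_cos_mult_cos_add_lt[of \<psi> \<phi>] assms
    by (simp_all add: g_def power2_eq_square algebra_simps)
  ultimately have "g a b < 0"
    using biquadratic_neg_on_box[of "2 * cos \<phi>" a 1 "2 * cos \<psi>" b 1 "cos (\<phi> + \<psi>)" "cos \<phi>" "cos \<psi>"]
      a b by (simp add: g_def mult.commute mult.left_commute)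
  then have "(cmod (rcis a \<phi> + rcis b (-\<psi>) - 1))\<^sup>2 < 1\<^sup>2" using norm_sq by simp
  then show ?thesis by (rule power_less_imp_less_base) simp
qed

lemma two_cos_Arg_le_norm:
  fixes z :: complex
  assumes "z \<noteq> 0" "1 \<le> cmod (z - 1)"
  shows "2 * cos (Arg z) \<le> cmod z"
proof -
  define \<rho> where "\<rho> = cmod z"
  have "Re z = \<rho> * cos (Arg z)" "Im z = \<rho> * sin (Arg z)"
    using assms by (simp_all add: \<rho>_def cos_Arg sin_Arg)
  then have "(cmod (z - 1))\<^sup>2 = (\<rho> * cos (Arg z) - 1)\<^sup>2 + (\<rho> * sin (Arg z))\<^sup>2"
    by (simp add: cmod_power2)
  also have "\<dots> = \<rho>\<^sup>2 * ((sin (Arg z))\<^sup>2 + (cos (Arg z))\<^sup>2) - 2*\<rho>*cos (Arg z) + 1"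
    by algebra
  finally have "(cmod (z - 1))\<^sup>2 = \<rho>\<^sup>2 - 2*\<rho>*cos (Arg z) + 1" by simp
  moreover have "1 \<le> (cmod (z - 1))\<^sup>2" using assms(2) by (rule one_le_power)
  ultimately have "0 \<le> \<rho> * (\<rho> - 2 * cos (Arg z))"
    by (simp add: power2_eq_square algebra_simps)
  moreover have "0 < \<rho>" using assms(1) by (simp add: \<rho>_def)
  ultimately show ?thesis by (simp add: \<rho>_def zero_le_mult_iff)
qed

definition lune :: "complex \<Rightarrow> complex \<Rightarrow> complex set" where
  "lune a b = {w. w \<noteq> a \<and> dist a w < dist a b \<and> dist a b \<le> dist w b}"

lemma mem_lune_0_1: "z \<in> lune 0 1 \<longleftrightarrow> z \<noteq> 0 \<and> cmod z < 1 \<and> 1 \<le> cmod (z - 1)"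
  by (simp add: lune_def dist_norm)

lemma lune_neq: "w \<in> lune a b \<Longrightarrow> a \<noteq> b"
  by (auto simp: lune_def)

lemma norm_normalized:
  fixes a b w :: complex
  assumes "a \<noteq> b"
  shows "cmod ((w - a) / (b - a)) = dist a w / dist a b"
    and "cmod ((w - a) / (b - a) - 1) = dist w b / dist a b"
proof -
  have "1 = (b - a) / (b - a)" using assms by simp
  then have "(w - a) / (b - a) - 1 = ((w - a) - (b - a)) / (b - a)"
    by (metis diff_divide_distrib)
  then show "cmod ((w - a) / (b - a) - 1) = dist w b / dist a b"
    by (simp add: norm_divide dist_norm norm_minus_commute)
qed (simp add: norm_divide dist_norm norm_minus_commute)

lemma normalized_mem_lune_0_1_iff:
  assumes "a \<noteq> b"
  shows "(w - a) / (b - a) \<in> lune 0 1 \<longleftrightarrow> w \<in> lune a b"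
  unfolding mem_lune_0_1 using assms
  by (simp add: norm_normalized lune_def divide_less_eq_1_pos le_divide_eq_1_pos)

lemma pi_third_lt_abs_Arg:
  assumes "z \<in> lune 0 1"
  shows "pi/3 < \<bar>Arg z\<bar>"
proof (rule ccontr)
  assume "\<not> pi/3 < \<bar>Arg z\<bar>"
  then have "cos (pi/3) \<le> cos \<bar>Arg z\<bar>" by (intro cos_monotone_0_pi_le) auto
  then have "1 \<le> 2 * cos (Arg z)" by (simp add: cos_60 abs_real_def split: if_splits)
  with two_cos_Arg_le_norm[of z] assms show False by (simp add: mem_lune_0_1)
qed

lemma norm_add_minus_one_lt_one:
  assumes "z \<in> lune 0 1" "y \<in> lune 0 1"
    and "0 < Arg z" "Arg y < 0" "Arg z - Arg y \<le> 5*pi/6"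
  shows "cmod (z + y - 1) < 1"
proof -
  have "pi/3 < Arg z" "pi/3 < - Arg y"
    using pi_third_lt_abs_Arg[OF assms(1)] pi_third_lt_abs_Arg[OF assms(2)] assms(3,4) by auto
  moreover have "2 * cos (Arg z) \<le> cmod z" "2 * cos (- Arg y) \<le> cmod y"
    using two_cos_Arg_le_norm[of z] two_cos_Arg_le_norm[of y] assms(1,2)
    by (simp_all add: mem_lune_0_1)
  ultimately have "cmod (rcis (cmod z) (Arg z) + rcis (cmod y) (- (- Arg y)) - 1) < 1"
    using assms by (intro norm_rcis_add_rcis_minus_one_lt_one) (auto simp: mem_lune_0_1)
  then show ?thesis by (simp add: rcis_cmod_Arg)
qed

definition signed_angle :: "complex \<Rightarrow> complex \<Rightarrow> complex \<Rightarrow> real" where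
  "signed_angle a b w = Arg ((w - a) / (b - a))"

lemma lune_abs_signed_angle_gt: "w \<in> lune a b \<Longrightarrow> pi/3 < \<bar>signed_angle a b w\<bar>"
  unfolding signed_angle_def
  by (intro pi_third_lt_abs_Arg) (simp add: normalized_mem_lune_0_1_iff lune_neq)

lemma lune_points_dist_lt:
  assumes w: "w \<in> lune a b" and x: "x \<in> lune b a"
    and "0 < signed_angle a b w" "signed_angle b a x < 0"
    and "signed_angle a b w - signed_angle b a x \<le> 5*pi/6"
  shows "dist w x < dist a b"
proof -
  have "a \<noteq> b" using w by (rule lune_neq)
  define z where "z = (w - a) / (b - a)"
  define y where "y = (x - b) / (a - b)"
  have "z + y - 1 = ((w - a) + (b - x) - (b - a)) / (b - a)"
  proof -
    have "1 = (b - a) / (b - a)" using \<open>a \<noteq> b\<close> by simp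
    moreover have "y = (b - x) / (b - a)" unfolding y_def by (metis minus_diff_eq minus_divide_divide)
    ultimately show ?thesis unfolding z_def by (simp only: add_divide_distrib diff_divide_distrib)
  qed
  then have "cmod (z + y - 1) = dist w x / dist a b" by (simp add: norm_divide dist_norm norm_minus_commute)
  moreover have "cmod (z + y - 1) < 1"
    using assms \<open>a \<noteq> b\<close>
    by (intro norm_add_minus_one_lt_one) (simp_all add: z_def y_def normalized_mem_lune_0_1_iff signed_angle_def)
  moreover have "0 < dist a b" using \<open>a \<noteq> b\<close> by simp
  ultimately show ?thesis by simp
qed

lemma Arg_rcis_eq_mod_2pi:
  assumes "0 < \<rho>"
  shows "\<exists>j::int. \<phi> = Arg (rcis \<rho> \<phi>) + 2*pi*j"
proof -
  have "rcis \<rho> \<phi> \<noteq> 0" using assms by simp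
  then have "cis (Arg (rcis \<rho> \<phi>)) = cis \<phi>"
    using assms by (simp add: cis_Arg rcis_def sgn_mult sgn_of_real)
  then have "sin \<phi> = sin (Arg (rcis \<rho> \<phi>)) \<and> cos \<phi> = cos (Arg (rcis \<rho> \<phi>))"
    by (simp add: complex_eq_iff)
  then show ?thesis by (simp add: sin_cos_eq_iff)
qed

lemma int_eq_0_if_abs_add_2pi_lt:
  fixes x :: real and m :: int
  assumes "\<bar>x\<bar> \<le> pi" "\<bar>x + 2*pi*m\<bar> < pi"
  shows "m = 0"
proof -
  have "\<bar>2*pi*m\<bar> \<le> \<bar>x + 2*pi*m\<bar> + \<bar>x\<bar>" by linarith
  also have "\<dots> < 2*pi*1" using assms by simp
  finally have "\<bar>real_of_int m\<bar> < 1" by (simp add: abs_mult)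
  then show ?thesis by linarith
qed

lemma covering_angles_straddle_zero:
  fixes D :: "real set" and \<alpha> :: real
  assumes "finite D" "0 < \<alpha>" "\<alpha> < pi"
    and D: "\<And>d. d \<in> D \<Longrightarrow> \<bar>d\<bar> \<le> pi \<and> d \<noteq> 0"
    and cover: "\<And>\<theta>. \<bar>\<theta>\<bar> \<le> \<alpha>/2 \<Longrightarrow> \<exists>d\<in>D. \<exists>m::int. \<bar>\<theta> - d - 2*pi*m\<bar> \<le> \<alpha>/2"
  shows "\<exists>p\<in>D. \<exists>q\<in>D. q < 0 \<and> 0 < p \<and> p - q \<le> \<alpha>"
proof -
  \<comment> \<open>the sentinels 2pi and -2pi stand for a missing positive or negative element\<close>
  define P where "P = insert (2*pi) {d \<in> D. 0 < d}"
  define Q where "Q = insert (-2*pi) {d \<in> D. d < 0}"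
  define p where "p = Min P"
  define q where "q = Max Q"
  have "finite P" "finite Q" "P \<noteq> {}" "Q \<noteq> {}" using assms(1) by (simp_all add: P_def Q_def)
  then have P: "p \<in> P" "\<And>d. d \<in> P \<Longrightarrow> p \<le> d"
    and Q: "q \<in> Q" "\<And>d. d \<in> Q \<Longrightarrow> d \<le> q"
    by (simp_all add: p_def q_def)
  have "0 < p" "q < 0" using P(1) Q(1) pi_gt_zero by (auto simp: P_def Q_def)
  have "p - q \<le> \<alpha>"
  proof (rule ccontr)
    assume gap: "\<not> p - q \<le> \<alpha>"
    \<comment> \<open>the midpoint of the empty arc (q, p), clamped to the cone around direction 0\<close>
    define \<theta> where "\<theta> = max (-\<alpha>/2) (min (\<alpha>/2) ((p + q)/2))"
    have "\<bar>\<theta>\<bar> \<le> \<alpha>/2" using assms(2) by (simp add: \<theta>_def)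
    then obtain d and m :: int where d: "d \<in> D" and dm: "\<bar>\<theta> - d - 2*pi*m\<bar> \<le> \<alpha>/2"
      using cover by blast
    have "\<bar>d + 2*pi*m\<bar> < pi" using dm \<open>\<bar>\<theta>\<bar> \<le> \<alpha>/2\<close> assms(3) by linarith
    then have "m = 0" using D[OF d] by (intro int_eq_0_if_abs_add_2pi_lt) auto
    moreover have "q < \<theta> - \<alpha>/2" "\<theta> + \<alpha>/2 < p"
      using gap \<open>0 < p\<close> \<open>q < 0\<close> unfolding \<theta>_def max_def min_def by (auto simp: field_simps)
    ultimately have "q < d" "d < p" using dm[unfolded abs_le_iff] by simp_all
    moreover have "d \<in> P \<or> d \<in> Q" using D[OF d] d by (auto simp: P_def Q_def)
    ultimately show False using P(2)[of d] Q(2)[of d] by auto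
  qed
  then have "p \<noteq> 2*pi" "q \<noteq> -2*pi" using \<open>0 < p\<close> \<open>q < 0\<close> assms(3) by auto
  then have "p \<in> D" "q \<in> D" using P(1) Q(1) unfolding P_def Q_def by blast+
  with \<open>0 < p\<close> \<open>q < 0\<close> \<open>p - q \<le> \<alpha>\<close> show ?thesis by blast
qed

lemma finite_less_measure_induct:
  fixes f :: "'a \<Rightarrow> 'b::linorder"
  assumes "finite A" "x \<in> A"
    and step: "\<And>x. x \<in> A \<Longrightarrow> (\<And>y. y \<in> A \<Longrightarrow> f y < f x \<Longrightarrow> P y) \<Longrightarrow> P x"
  shows "P x"
proof -
  have "P x" if "x \<in> A" "card {y \<in> A. f y < f x} = n" for n x
    using that
  proof (induction n arbitrary: x rule: less_induct)
    case (less n)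
    show ?case
    proof (rule step[OF less.prems(1)])
      fix y assume y: "y \<in> A" "f y < f x"
      then have "{z \<in> A. f z < f y} \<subset> {z \<in> A. f z < f x}" by auto
      then have "card {z \<in> A. f z < f y} < card {z \<in> A. f z < f x}"
        by (intro psubset_card_mono) (simp add: assms(1))
      then have "card {z \<in> A. f z < f y} < n" using less.prems(2) by simp
      then show "P y" using less.IH y(1) by blast
    qed
  qed
  then show ?thesis using assms(2) by blast
qed

lemma idx_u_if_not_boundary:
  assumes "1 \<le> k" "\<not> boundary V r k \<alpha> u"
  shows "idx_u V r k \<alpha> u \<in> {1..k}" and "\<not> has_gap \<alpha> u (N_cbtc V r k \<alpha> u)"
proof -
  have ex: "\<exists>i. i \<in> {1..k} \<and> \<not> has_gap \<alpha> u (S_i V r i u)"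
    using assms by (auto simp: boundary_def)
  then have "idx_u V r k \<alpha> u = (LEAST i. i \<in> {1..k} \<and> \<not> has_gap \<alpha> u (S_i V r i u))"
    unfolding idx_u_def by auto
  with LeastI_ex[OF ex] show "idx_u V r k \<alpha> u \<in> {1..k}" "\<not> has_gap \<alpha> u (N_cbtc V r k \<alpha> u)"
    by (simp_all add: N_cbtc_def)
qed

lemma idx_star:
  assumes "1 \<le> k"
  shows "idx_star V r k \<alpha> u \<in> {1..k}"
    and "cover \<alpha> (dirs u (S_i V r (idx_star V r k \<alpha> u) u)) = cover \<alpha> (dirs u (S_i V r k u))"
proof -
  let ?P = "\<lambda>i. i \<in> {1..k} \<and> cover \<alpha> (dirs u (S_i V r i u)) = cover \<alpha> (dirs u (S_i V r k u))"
  have "?P k" using assms by simp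
  then have "?P (idx_star V r k \<alpha> u)" unfolding idx_star_def by (rule LeastI)
  then show "idx_star V r k \<alpha> u \<in> {1..k}"
    "cover \<alpha> (dirs u (S_i V r (idx_star V r k \<alpha> u) u)) = cover \<alpha> (dirs u (S_i V r k u))"
    by blast+
qed

lemma N_shrink_eq_S_i:
  assumes "1 \<le> k"
  shows "\<exists>j\<in>{1..k}. N_shrink V r k \<alpha> u = S_i V r j u"
proof (cases "boundary V r k \<alpha> u")
  case True
  then show ?thesis
    using idx_star(1)[OF assms] by (intro bexI[of _ "idx_star V r k \<alpha> u"]) (simp_all add: N_shrink_def)
next
  case False
  then show ?thesis
    using idx_u_if_not_boundary(1)[OF assms False]
    by (intro bexI[of _ "idx_u V r k \<alpha> u"]) (simp_all add: N_shrink_def N_cbtc_def)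
qed

lemma N_shrink_subset_V: "1 \<le> k \<Longrightarrow> N_shrink V r k \<alpha> u \<subseteq> V - {u}"
  using N_shrink_eq_S_i[of k V r \<alpha> u] by (auto simp: S_i_def)

lemma N_shrink_subset_S_i:
  assumes "1 \<le> k" and r_mono: "\<And>i j. 1 \<le> i \<Longrightarrow> i < j \<Longrightarrow> j \<le> k \<Longrightarrow> r i < r j"
  shows "N_shrink V r k \<alpha> u \<subseteq> S_i V r k u"
proof -
  obtain j where j: "j \<in> {1..k}" "N_shrink V r k \<alpha> u = S_i V r j u"
    using N_shrink_eq_S_i[OF assms(1)] by blast
  then have "r j \<le> r k" using r_mono[of j k] by (cases "j = k") auto
  then show ?thesis unfolding j(2) S_i_def by auto
qed

lemma dist_lt_if_notin_N_shrink:
  assumes "1 \<le> k" "v \<in> S_i V r k u" "v \<notin> N_shrink V r k \<alpha> u" "w \<in> N_shrink V r k \<alpha> u"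
  shows "dist u w < dist u v"
proof -
  obtain j where j: "N_shrink V r k \<alpha> u = S_i V r j u"
    using N_shrink_eq_S_i[OF assms(1)] by blast
  have "dist u w \<le> r j" "r j < dist u v" using assms(2-4) unfolding j S_i_def by auto
  then show ?thesis by linarith
qed

lemma cover_dirs_eq_UNIV_if_no_gap:
  assumes "\<not> has_gap \<alpha> u S" "u \<notin> S"
  shows "cover \<alpha> (dirs u S) = UNIV"
proof (intro set_eqI iffI)
  fix \<theta> :: real
  obtain v where v: "v \<in> S" "v \<in> cone u \<alpha> \<theta>" using assms(1) unfolding has_gap_def by blast
  then obtain t \<phi> where tp: "v = u + complex_of_real t * cis \<phi>" "0 \<le> t"
      "\<theta> - \<alpha>/2 \<le> \<phi>" "\<phi> \<le> \<theta> + \<alpha>/2"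
    unfolding cone_def by blast
  have "t \<noteq> 0" using tp(1) v(1) assms(2) by auto
  with tp v(1) have "\<phi> \<in> dirs u S" unfolding dirs_def by force
  moreover have "\<bar>\<theta> - \<phi>\<bar> \<le> \<alpha>/2" by (rule abs_leI) (use tp(3,4) in linarith)+
  then have "\<bar>\<theta> - \<phi> - 2 * pi * of_int (0::int)\<bar> \<le> \<alpha>/2" by simp
  ultimately show "\<theta> \<in> cover \<alpha> (dirs u S)" unfolding cover_def by blast
qed simp

lemma cover_dirs_singleton_subset_N_shrink:
  assumes "1 \<le> k" "v \<in> S_i V r k u"
  shows "cover \<alpha> (dirs u {v}) \<subseteq> cover \<alpha> (dirs u (N_shrink V r k \<alpha> u))"
proof (cases "boundary V r k \<alpha> u")
  case True
  have "cover \<alpha> (dirs u {v}) \<subseteq> cover \<alpha> (dirs u (S_i V r k u))"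
    using assms(2) unfolding cover_def dirs_def by blast
  with True show ?thesis using idx_star(2)[OF assms(1)] by (simp add: N_shrink_def)
next
  case False
  then have "cover \<alpha> (dirs u (N_cbtc V r k \<alpha> u)) = UNIV"
    using idx_u_if_not_boundary(2)[OF assms(1)]
    by (intro cover_dirs_eq_UNIV_if_no_gap) (simp_all add: N_cbtc_def S_i_def)
  with False show ?thesis by (simp add: N_shrink_def)
qed

lemma cover_signed_angle:
  assumes "a \<noteq> b" "cover \<alpha> (dirs a {b}) \<subseteq> cover \<alpha> (dirs a N)" "\<bar>\<theta>\<bar> \<le> \<alpha>/2"
  shows "\<exists>w\<in>N. \<exists>m::int. \<bar>\<theta> - signed_angle a b w - 2*pi*m\<bar> \<le> \<alpha>/2"
proof -
  define A where "A = Arg (b - a)"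
  define d where "d = cmod (b - a)"
  have "0 < d" using assms(1) by (simp add: d_def)
  have b: "b - a = complex_of_real d * cis A"
    using rcis_cmod_Arg[of "b - a"] by (simp add: rcis_def d_def A_def)
  have "\<bar>(\<theta> + A) - A - 2*pi*of_int (0::int)\<bar> \<le> \<alpha>/2" using assms(3) by simp
  moreover have "A \<in> dirs a {b}" unfolding dirs_def using \<open>0 < d\<close> b by blast
  ultimately have "\<theta> + A \<in> cover \<alpha> (dirs a N)" using assms(2) unfolding cover_def by blast
  then obtain \<phi> m where "\<phi> \<in> dirs a N" and m: "\<bar>\<theta> + A - \<phi> - 2*pi*of_int (m::int)\<bar> \<le> \<alpha>/2"
    unfolding cover_def by blast
  then obtain w t where w: "w \<in> N" "0 < t" "w - a = complex_of_real t * cis \<phi>"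
    unfolding dirs_def by blast
  have "(w - a) / (b - a) = rcis (t/d) (\<phi> - A)"
    using w(3) b \<open>0 < d\<close> by (simp add: rcis_def cis_divide[symmetric])
  then obtain j :: int where j: "\<phi> - A = signed_angle a b w + 2*pi*j"
    using Arg_rcis_eq_mod_2pi[of "t/d" "\<phi> - A"] w(2) \<open>0 < d\<close> by (auto simp: signed_angle_def)
  have "\<theta> - signed_angle a b w - 2*pi*of_int (m + j) = \<theta> + A - \<phi> - 2*pi*of_int m"
    using j by (simp add: algebra_simps)
  with m w(1) show ?thesis by metis
qed

lemma N_shrink_subset_lune:
  assumes "1 \<le> k" "b \<in> S_i V r k a" "b \<notin> N_shrink V r k \<alpha> a"
    and "\<And>w. w \<in> N_shrink V r k \<alpha> a \<Longrightarrow> dist a b \<le> dist w b"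
  shows "N_shrink V r k \<alpha> a \<subseteq> lune a b"
  using N_shrink_subset_V[OF assms(1), of V r \<alpha> a] dist_lt_if_notin_N_shrink[OF assms(1-3)] assms(4)
  by (auto simp: lune_def)

lemma N_shrink_signed_angles_straddle:
  assumes "finite V" "1 \<le> k" "0 < \<alpha>" "\<alpha> < pi"
    and b: "b \<in> S_i V r k a" and lune: "N_shrink V r k \<alpha> a \<subseteq> lune a b"
  shows "\<exists>w1\<in>N_shrink V r k \<alpha> a. \<exists>w2\<in>N_shrink V r k \<alpha> a.
    signed_angle a b w2 < 0 \<and> 0 < signed_angle a b w1 \<and> signed_angle a b w1 - signed_angle a b w2 \<le> \<alpha>"
proof -
  let ?N = "N_shrink V r k \<alpha> a"
  have "a \<noteq> b" using b by (auto simp: S_i_def)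
  have "finite ?N"
    using N_shrink_subset_V[OF assms(2), of V r \<alpha> a] by (rule finite_subset) (simp add: assms(1))
  have "\<exists>p\<in>signed_angle a b ` ?N. \<exists>q\<in>signed_angle a b ` ?N. q < 0 \<and> 0 < p \<and> p - q \<le> \<alpha>"
  proof (rule covering_angles_straddle_zero)
    fix d assume "d \<in> signed_angle a b ` ?N"
    then obtain w where "w \<in> ?N" "d = signed_angle a b w" by blast
    moreover have "pi/3 < \<bar>signed_angle a b w\<bar>"
      using lune \<open>w \<in> ?N\<close> by (blast intro: lune_abs_signed_angle_gt)
    moreover have "\<bar>signed_angle a b w\<bar> \<le> pi"
      using Arg_bounded[of "(w - a) / (b - a)"] by (simp add: signed_angle_def abs_le_iff)
    ultimately show "\<bar>d\<bar> \<le> pi \<and> d \<noteq> 0" by auto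
  next
    fix \<theta> :: real assume "\<bar>\<theta>\<bar> \<le> \<alpha>/2"
    then show "\<exists>d\<in>signed_angle a b ` ?N. \<exists>m::int. \<bar>\<theta> - d - 2*pi*m\<bar> \<le> \<alpha>/2"
      using cover_signed_angle[OF \<open>a \<noteq> b\<close> cover_dirs_singleton_subset_N_shrink[OF assms(2) b]]
      by blast
  qed (use \<open>finite ?N\<close> assms(3,4) in auto)
  then show ?thesis by blast
qed

lemma edge_s_sym: "edge_s V r k \<alpha> u v \<Longrightarrow> edge_s V r k \<alpha> v u"
  by (auto simp: edge_s_def)

lemma edge_s_imp_edge_R:
  assumes "1 \<le> k" "\<And>i j. 1 \<le> i \<Longrightarrow> i < j \<Longrightarrow> j \<le> k \<Longrightarrow> r i < r j" "r k = R"
    and "edge_s V r k \<alpha> u v"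
  shows "edge_R V R u v"
proof -
  have "v \<in> S_i V r k u \<or> u \<in> S_i V r k v"
    using assms(4) N_shrink_subset_S_i[of k r, OF assms(1,2)] by (auto simp: edge_s_def)
  moreover have "u \<in> V" "v \<in> V" using assms(4) by (simp_all add: edge_s_def)
  ultimately show ?thesis using assms(3) by (auto simp: edge_R_def S_i_def dist_commute)
qed

lemma lune_neighbours_close:
  assumes "finite V" "1 \<le> k" "0 < \<alpha>" "\<alpha> \<le> 5*pi/6"
    and ab: "b \<in> S_i V r k a" "N_shrink V r k \<alpha> a \<subseteq> lune a b"
    and ba: "a \<in> S_i V r k b" "N_shrink V r k \<alpha> b \<subseteq> lune b a"
  shows "\<exists>w\<in>N_shrink V r k \<alpha> a. \<exists>x\<in>N_shrink V r k \<alpha> b. dist w x < dist a b"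
proof -
  let ?N = "N_shrink V r k \<alpha>"
  have "\<alpha> < pi" using assms(4) pi_gt_zero by linarith
  obtain w1 w2 where w: "w1 \<in> ?N a" "w2 \<in> ?N a" "signed_angle a b w2 < 0" "0 < signed_angle a b w1"
      "signed_angle a b w1 - signed_angle a b w2 \<le> \<alpha>"
    using N_shrink_signed_angles_straddle[OF assms(1-3) \<open>\<alpha> < pi\<close> ab] by blast
  obtain x1 x2 where x: "x1 \<in> ?N b" "x2 \<in> ?N b" "signed_angle b a x2 < 0" "0 < signed_angle b a x1"
      "signed_angle b a x1 - signed_angle b a x2 \<le> \<alpha>"
    using N_shrink_signed_angles_straddle[OF assms(1-3) \<open>\<alpha> < pi\<close> ba] by blast
  \<comment> \<open>the two angular gaps sum to at most 2 \<alpha> \<le> 5 pi / 3\<close>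
  consider "signed_angle a b w1 - signed_angle b a x2 \<le> 5*pi/6"
    | "signed_angle b a x1 - signed_angle a b w2 \<le> 5*pi/6"
    using w(5) x(5) assms(4) by linarith
  then show ?thesis
  proof cases
    case 1
    then have "dist w1 x2 < dist a b"
      using ab(2) ba(2) w(1,4) x(2,3) by (intro lune_points_dist_lt) auto
    then show ?thesis using w(1) x(2) by blast
  next
    case 2
    then have "dist x1 w2 < dist b a"
      using ab(2) ba(2) w(2,3) x(1,4) by (intro lune_points_dist_lt) auto
    then show ?thesis using w(2) x(1) by (metis dist_commute)
  qed
qed

lemma rtranclp_edge_s_if_closer_pairs:
  assumes "finite V" "1 \<le> k" "r k = R" "0 < \<alpha>" "\<alpha> \<le> 5*pi/6"
    and "a \<in> V" "b \<in> V" "a \<noteq> b" "dist a b \<le> R"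
    and IH: "\<And>x y. x \<in> V \<Longrightarrow> y \<in> V \<Longrightarrow> dist x y < dist a b \<Longrightarrow> (edge_s V r k \<alpha>)\<^sup>*\<^sup>* x y"
  shows "(edge_s V r k \<alpha>)\<^sup>*\<^sup>* a b"
proof (cases "edge_s V r k \<alpha> a b")
  case False
  let ?E = "edge_s V r k \<alpha>" and ?N = "N_shrink V r k \<alpha>"
  have S: "b \<in> S_i V r k a" "a \<in> S_i V r k b"
    using assms(3,6-9) by (auto simp: S_i_def dist_commute)
  have notin: "b \<notin> ?N a" "a \<notin> ?N b" using False assms(6,7) by (auto simp: edge_s_def)
  have N: "w \<in> V" "?E\<^sup>*\<^sup>* p w" "?E\<^sup>*\<^sup>* w p" if "p \<in> V" "w \<in> ?N p" for p w
  proof -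
    show "w \<in> V" using that N_shrink_subset_V[OF assms(2), of V r \<alpha> p] by auto
    then have "?E p w" using that by (simp add: edge_s_def)
    then show "?E\<^sup>*\<^sup>* p w" "?E\<^sup>*\<^sup>* w p" by (auto intro: edge_s_sym)
  qed
  have via: "?E\<^sup>*\<^sup>* a b" if "?E\<^sup>*\<^sup>* a w" "?E\<^sup>*\<^sup>* x b" "w \<in> V" "x \<in> V" "dist w x < dist a b" for w x
    using IH[OF that(3-5)] that(1,2) by (meson rtranclp_trans)
  consider (near_a) w where "w \<in> ?N a" "dist w b < dist a b"
    | (near_b) x where "x \<in> ?N b" "dist a x < dist a b"
    | (lunes) "\<And>w. w \<in> ?N a \<Longrightarrow> dist a b \<le> dist w b" "\<And>x. x \<in> ?N b \<Longrightarrow> dist b a \<le> dist x a"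
    by (metis dist_commute not_le)
  then show ?thesis
  proof cases
    case near_a
    then show ?thesis using via[of w b] N[OF assms(6)] assms(7) by blast
  next
    case near_b
    then show ?thesis using via[of a x] N[OF assms(7)] assms(6) by blast
  next
    case lunes
    have "?N a \<subseteq> lune a b" "?N b \<subseteq> lune b a"
      using N_shrink_subset_lune[OF assms(2) S(1) notin(1)] N_shrink_subset_lune[OF assms(2) S(2) notin(2)]
        lunes by blast+
    then obtain w x where "w \<in> ?N a" "x \<in> ?N b" "dist w x < dist a b"
      using lune_neighbours_close[OF assms(1,2,4,5) S(1) _ S(2)] by blast
    then show ?thesis using via[of w x] N[OF assms(6)] N[OF assms(7)] by blast
  qed
qed simp

lemma edge_R_imp_rtranclp_edge_s:
  assumes "finite V" "1 \<le> k" "r k = R" "0 < \<alpha>" "\<alpha> \<le> 5*pi/6" "edge_R V R a b"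
  shows "(edge_s V r k \<alpha>)\<^sup>*\<^sup>* a b"
proof -
  define P where "P = (\<lambda>(x, y). dist x y \<le> R \<longrightarrow> (edge_s V r k \<alpha>)\<^sup>*\<^sup>* x y)"
  have "P (a, b)"
  proof (rule finite_less_measure_induct[where f = "\<lambda>(x, y). dist x y"])
    show "finite (V \<times> V)" "(a, b) \<in> V \<times> V" using assms(1,6) by (simp_all add: edge_R_def)
  next
    fix p assume "p \<in> V \<times> V"
      and IH: "\<And>q. q \<in> V \<times> V \<Longrightarrow> (\<lambda>(x, y). dist x y) q < (\<lambda>(x, y). dist x y) p \<Longrightarrow> P q"
    then obtain x y where p: "p = (x, y)" "x \<in> V" "y \<in> V" by blast
    have "(edge_s V r k \<alpha>)\<^sup>*\<^sup>* x y" if "dist x y \<le> R" "x \<noteq> y"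
      using rtranclp_edge_s_if_closer_pairs[of V k r, OF assms(1-5) p(2,3) that(2,1)] IH that(1)
      by (fastforce simp: p(1) P_def)
    then show "P p" by (auto simp: p(1) P_def)
  qed
  then show ?thesis using assms(6) by (simp add: P_def edge_R_def)
qed

theorem theorem3:
  fixes V :: "complex set" and r :: "nat \<Rightarrow> real" and k :: nat and R \<alpha> :: real
  assumes "finite V"
    and "R > 0"
    and "k \<ge> 1"
    and "r 1 > 0"
    and "\<And>i j. 1 \<le> i \<Longrightarrow> i < j \<Longrightarrow> j \<le> k \<Longrightarrow> r i < r j"
    and "r k = R"
    and "0 < \<alpha>" and "\<alpha> \<le> 5 * pi / 6"
    and "u \<in> V" and "v \<in> V"
  shows "(edge_s V r k \<alpha>)\<^sup>*\<^sup>* u v \<longleftrightarrow> (edge_R V R)\<^sup>*\<^sup>* u v"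
proof
  have "edge_s V r k \<alpha> \<le> edge_R V R"
    using edge_s_imp_edge_R[of k r, OF assms(3,5,6)] by blast
  then show "(edge_s V r k \<alpha>)\<^sup>*\<^sup>* u v \<Longrightarrow> (edge_R V R)\<^sup>*\<^sup>* u v"
    using rtranclp_mono by (metis predicate2D)
next
  have "edge_R V R \<le> (edge_s V r k \<alpha>)\<^sup>*\<^sup>*"
    using edge_R_imp_rtranclp_edge_s[of V k r, OF assms(1,3,6,7,8)] by blast
  then show "(edge_R V R)\<^sup>*\<^sup>* u v \<Longrightarrow> (edge_s V r k \<alpha>)\<^sup>*\<^sup>* u v"
    using rtranclp_mono[of "edge_R V R" "(edge_s V r k \<alpha>)\<^sup>*\<^sup>*"] by (metis predicate2D rtranclp_idemp)
qed

end
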